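(* Let $G$ be a graph with $|V(G)|=2^k$, $\mathrm{enc}:V(G)\to\{0,1\}^k$ a bijection, and $R[G]=(P,N)$ with $P=\{\mathrm{enc}(u)1\mathrm{enc}(u)^R:u\in V(G)\}$, $N=\{\mathrm{enc}(u)1\mathrm{enc}(v)^R:uv\in E(G)\}$. Then every NFA consistent with $(P,N)$ has at least $\chi(G)$ states. Consequently $\mathrm{opt}_{DFA}(R[G])\ge\mathrm{opt}_{NFA}(R[G])\ge\chi(G)$.
   Context: $\chi(G)$ is the chromatic number. $\mathrm{opt}_{DFA}$ and $\mathrm{opt}_{NFA}$ denote the minimum number of states of a DFA (possibly with partial transition function), resp. NFA, over $\{0,1\}$ that accepts all of $P$ and rejects all of $N$. $x^R$ is string reversal. *)

theory Defs
  imports Main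
begin

definition simple_graph :: "'a set \<Rightarrow> ('a \<Rightarrow> 'a \<Rightarrow> bool) \<Rightarrow> bool" where
  "simple_graph V E \<longleftrightarrow> finite V \<and> (\<forall>u v. E u v \<longrightarrow> u \<in> V \<and> v \<in> V)
     \<and> (\<forall>u v. E u v \<longrightarrow> E v u) \<and> (\<forall>u. \<not> E u u)"

definition proper_colouring :: "'a set \<Rightarrow> ('a \<Rightarrow> 'a \<Rightarrow> bool) \<Rightarrow> nat \<Rightarrow> ('a \<Rightarrow> nat) \<Rightarrow> bool" where
  "proper_colouring V E c f \<longleftrightarrow> (\<forall>v\<in>V. f v < c) \<and>
     (\<forall>u\<in>V. \<forall>v\<in>V. E u v \<longrightarrow> f u \<noteq> f v)"

definition chromatic_number :: "'a set \<Rightarrow> ('a \<Rightarrow> 'a \<Rightarrow> bool) \<Rightarrow> nat" where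
  "chromatic_number V E = (LEAST c. \<exists>f. proper_colouring V E c f)"

text \<open>Words over {0,1} are bool lists (False = 0, True = 1).\<close>

definition nfa_wf :: "'s set \<Rightarrow> 's set \<Rightarrow> ('s \<Rightarrow> bool \<Rightarrow> 's set) \<Rightarrow> 's set \<Rightarrow> bool" where
  "nfa_wf Q I \<delta> F \<longleftrightarrow> finite Q \<and> I \<subseteq> Q \<and> F \<subseteq> Q \<and> (\<forall>q\<in>Q. \<forall>a. \<delta> q a \<subseteq> Q)"

fun nfa_steps :: "('s \<Rightarrow> bool \<Rightarrow> 's set) \<Rightarrow> 's set \<Rightarrow> bool list \<Rightarrow> 's set" where
  "nfa_steps \<delta> S [] = S"
| "nfa_steps \<delta> S (a # w) = nfa_steps \<delta> (\<Union>q\<in>S. \<delta> q a) w"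

definition nfa_accepts :: "'s set \<Rightarrow> ('s \<Rightarrow> bool \<Rightarrow> 's set) \<Rightarrow> 's set \<Rightarrow> bool list \<Rightarrow> bool" where
  "nfa_accepts I \<delta> F w \<longleftrightarrow> nfa_steps \<delta> I w \<inter> F \<noteq> {}"

definition nfa_consistent :: "'s set \<Rightarrow> 's set \<Rightarrow> ('s \<Rightarrow> bool \<Rightarrow> 's set) \<Rightarrow> 's set
     \<Rightarrow> bool list set \<Rightarrow> bool list set \<Rightarrow> bool" where
  "nfa_consistent Q I \<delta> F P N \<longleftrightarrow> nfa_wf Q I \<delta> F \<and>
     (\<forall>w\<in>P. nfa_accepts I \<delta> F w) \<and> (\<forall>w\<in>N. \<not> nfa_accepts I \<delta> F w)"

definition dfa_wf :: "'s set \<Rightarrow> 's \<Rightarrow> ('s \<Rightarrow> bool \<Rightarrow> 's option) \<Rightarrow> 's set \<Rightarrow> bool" where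
  "dfa_wf Q q0 \<delta> F \<longleftrightarrow> finite Q \<and> q0 \<in> Q \<and> F \<subseteq> Q \<and>
     (\<forall>q\<in>Q. \<forall>a q'. \<delta> q a = Some q' \<longrightarrow> q' \<in> Q)"

fun dfa_run :: "('s \<Rightarrow> bool \<Rightarrow> 's option) \<Rightarrow> 's \<Rightarrow> bool list \<Rightarrow> 's option" where
  "dfa_run \<delta> q [] = Some q"
| "dfa_run \<delta> q (a # w) = (case \<delta> q a of None \<Rightarrow> None | Some q' \<Rightarrow> dfa_run \<delta> q' w)"

definition dfa_accepts :: "'s \<Rightarrow> ('s \<Rightarrow> bool \<Rightarrow> 's option) \<Rightarrow> 's set \<Rightarrow> bool list \<Rightarrow> bool" where
  "dfa_accepts q0 \<delta> F w \<longleftrightarrow> (\<exists>q. dfa_run \<delta> q0 w = Some q \<and> q \<in> F)"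

definition dfa_consistent :: "'s set \<Rightarrow> 's \<Rightarrow> ('s \<Rightarrow> bool \<Rightarrow> 's option) \<Rightarrow> 's set
     \<Rightarrow> bool list set \<Rightarrow> bool list set \<Rightarrow> bool" where
  "dfa_consistent Q q0 \<delta> F P N \<longleftrightarrow> dfa_wf Q q0 \<delta> F \<and>
     (\<forall>w\<in>P. dfa_accepts q0 \<delta> F w) \<and> (\<forall>w\<in>N. \<not> dfa_accepts q0 \<delta> F w)"

text \<open>Minimum number of states (state type nat is w.l.o.g. for finite automata).\<close>
definition opt_NFA :: "bool list set \<Rightarrow> bool list set \<Rightarrow> nat" where
  "opt_NFA P N = (LEAST n. \<exists>(Q::nat set) I \<delta> F. nfa_consistent Q I \<delta> F P N \<and> card Q = n)"

definition opt_DFA :: "bool list set \<Rightarrow> bool list set \<Rightarrow> nat" where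
  "opt_DFA P N = (LEAST n. \<exists>(Q::nat set) q0 \<delta> F. dfa_consistent Q q0 \<delta> F P N \<and> card Q = n)"

definition red_P :: "'a set \<Rightarrow> ('a \<Rightarrow> bool list) \<Rightarrow> bool list set" where
  "red_P V enc = {enc u @ [True] @ rev (enc u) | u. u \<in> V}"

definition red_N :: "'a set \<Rightarrow> ('a \<Rightarrow> 'a \<Rightarrow> bool) \<Rightarrow> ('a \<Rightarrow> bool list) \<Rightarrow> bool list set" where
  "red_N V E enc = {enc u @ [True] @ rev (enc v) | u v. u \<in> V \<and> v \<in> V \<and> E u v}"

end

theory Submission
  imports Defs "HOL-Library.Countable"
begin

(* The lower bound is a fooling-set argument in which the fooling set is replaced by a graph.
   If an NFA accepts x_u y_u for every vertex u and rejects x_u y_v for every edge uv, then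
   choosing for each u a state reached after x_u from which y_u is accepted yields a proper
   colouring of the graph by states: an edge uv with equal states would let the NFA accept
   x_u y_v.  Hence every consistent NFA has at least chi(G) states (nfa_states_colour_graph),
   which for R[G] uses x_u = enc(u) and y_u = 1 enc(u)^R.
   For the statements about opt_NFA and opt_DFA one also needs that the minima are attained:
   R[G] is a finite sample with P and N disjoint, so a trie-shaped DFA is consistent with it
   (separating_dfa_exists), and every DFA is an NFA with the same number of states
   (nfa_of_dfa_consistent). *)

lemma nfa_steps_append: "nfa_steps \<delta> S (x @ y) = nfa_steps \<delta> (nfa_steps \<delta> S x) y"
  by (induction x arbitrary: S) auto

lemma nfa_steps_union: "nfa_steps \<delta> S w = (\<Union>q\<in>S. nfa_steps \<delta> {q} w)"
proof (induction w arbitrary: S)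
  case (Cons a w)
  show ?case
    by (simp add: Cons.IH[of "\<Union>q\<in>S. \<delta> q a"] Cons.IH[of "\<delta> _ a"] del: UN_simps) blast
qed simp

lemma nfa_steps_in_states:
  assumes "nfa_wf Q I \<delta> F" and "S \<subseteq> Q"
  shows "nfa_steps \<delta> S w \<subseteq> Q"
  using assms(2)
proof (induction w arbitrary: S)
  case (Cons a w)
  have "(\<Union>q\<in>S. \<delta> q a) \<subseteq> Q" using Cons.prems assms(1) unfolding nfa_wf_def by blast
  then show ?case using Cons.IH by simp
qed simp

lemma nfa_accepts_append_iff:
  "nfa_accepts I \<delta> F (x @ y) \<longleftrightarrow> (\<exists>q \<in> nfa_steps \<delta> I x. nfa_steps \<delta> {q} y \<inter> F \<noteq> {})"
  unfolding nfa_accepts_def nfa_steps_append nfa_steps_union[of \<delta> "nfa_steps \<delta> I x" y] by blast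

lemma chromatic_number_le_card:
  assumes "finite S" and into: "\<forall>v\<in>V. f v \<in> S"
    and proper: "\<forall>u\<in>V. \<forall>v\<in>V. E u v \<longrightarrow> f u \<noteq> f v"
  shows "chromatic_number V E \<le> card S"
proof -
  obtain h where "bij_betw h S {0..<card S}"
    using ex_bij_betw_finite_nat[OF \<open>finite S\<close>] by blast
  then have range: "\<forall>s\<in>S. h s < card S" and inj: "inj_on h S"
    by (auto simp: bij_betw_def)
  have "proper_colouring V E (card S) (h \<circ> f)"
    unfolding proper_colouring_def
    using into proper range inj_on_eq_iff[OF inj] by auto
  then show ?thesis unfolding chromatic_number_def by (intro Least_le) blast
qed

text \<open>Graph version of the fooling-set bound: vertices are coloured by a state in the
  middle of an accepting run of x_u y_u.\<close>
lemma nfa_states_colour_graph: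
  fixes x y :: "'a \<Rightarrow> bool list"
  assumes cons: "nfa_consistent Q I \<delta> F P N"
    and pos: "\<forall>u\<in>V. x u @ y u \<in> P"
    and neg: "\<forall>u\<in>V. \<forall>v\<in>V. E u v \<longrightarrow> x u @ y v \<in> N"
  shows "chromatic_number V E \<le> card Q"
proof -
  have wf: "nfa_wf Q I \<delta> F" using cons unfolding nfa_consistent_def by simp
  have "\<forall>u\<in>V. \<exists>q. q \<in> nfa_steps \<delta> I (x u) \<and> nfa_steps \<delta> {q} (y u) \<inter> F \<noteq> {}"
  proof
    fix u assume "u \<in> V"
    then have "nfa_accepts I \<delta> F (x u @ y u)"
      using pos cons unfolding nfa_consistent_def by blast
    then show "\<exists>q. q \<in> nfa_steps \<delta> I (x u) \<and> nfa_steps \<delta> {q} (y u) \<inter> F \<noteq> {}"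
      unfolding nfa_accepts_append_iff by blast
  qed
  then obtain c where c: "\<forall>u\<in>V. c u \<in> nfa_steps \<delta> I (x u) \<and> nfa_steps \<delta> {c u} (y u) \<inter> F \<noteq> {}"
    by (rule bchoice [THEN exE])
  have "I \<subseteq> Q" using wf unfolding nfa_wf_def by simp
  then have c_states: "\<forall>u\<in>V. c u \<in> Q"
    using c nfa_steps_in_states[OF wf] by blast
  have c_proper: "\<forall>u\<in>V. \<forall>v\<in>V. E u v \<longrightarrow> c u \<noteq> c v"
  proof (intro ballI impI notI)
    fix u v assume uv: "u \<in> V" "v \<in> V" "E u v" and same: "c u = c v"
    have "c v \<in> nfa_steps \<delta> I (x u)" using c uv(1) same[symmetric] by simp
    then have "nfa_accepts I \<delta> F (x u @ y v)"
      using c uv(2) unfolding nfa_accepts_append_iff by blast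
    moreover have "x u @ y v \<in> N" using neg uv by blast
    ultimately show False using cons unfolding nfa_consistent_def by blast
  qed
  have "finite Q" using wf unfolding nfa_wf_def by simp
  then show ?thesis using chromatic_number_le_card c_states c_proper by blast
qed

text \<open>The trie DFA on all words of length at most L: the state is (a code of) the prefix
  read so far, and there is no transition out of words of length L.\<close>
definition trie_delta :: "nat \<Rightarrow> nat \<Rightarrow> bool \<Rightarrow> nat option" where
  "trie_delta L q a =
     (if length (from_nat q :: bool list) < L
      then Some (to_nat (from_nat q @ [a] :: bool list)) else None)"

lemma trie_run:
  "length (u @ w) \<le> L \<Longrightarrow> dfa_run (trie_delta L) (to_nat (u :: bool list)) w = Some (to_nat (u @ w))"
proof (induction w arbitrary: u)
  case (Cons a w)
  then have "trie_delta L (to_nat u) a = Some (to_nat (u @ [a]))"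
    unfolding trie_delta_def by simp
  then show ?case using Cons.IH[of "u @ [a]"] Cons.prems by simp
qed simp

lemma separating_dfa_exists:
  assumes "P \<inter> N = {}" and "\<forall>w\<in>P \<union> N. length w \<le> L"
  shows "\<exists>(Q::nat set) q0 \<delta> F. dfa_consistent Q q0 \<delta> F P N"
proof -
  define Q where "Q = to_nat ` {w :: bool list. length w \<le> L}"
  have "finite {w :: bool list. length w \<le> L}"
    using finite_lists_length_le[of "UNIV :: bool set" L] by simp
  then have wf: "dfa_wf Q (to_nat ([] :: bool list)) (trie_delta L) (to_nat ` P)"
    unfolding dfa_wf_def Q_def using assms(2) by (auto simp: trie_delta_def split: if_splits)
  have "dfa_accepts (to_nat ([] :: bool list)) (trie_delta L) (to_nat ` P) w \<longleftrightarrow> w \<in> P"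
    if "length w \<le> L" for w
    using trie_run[of "[]" w L] that unfolding dfa_accepts_def by (auto dest: injD[OF inj_to_nat])
  then show ?thesis using wf assms unfolding dfa_consistent_def by blast
qed

lemma nfa_of_dfa_consistent:
  assumes "dfa_consistent Q q0 \<delta> F P N"
  shows "nfa_consistent Q {q0} (\<lambda>q a. set_option (\<delta> q a)) F P N"
proof -
  have no_run: "nfa_steps \<delta>' {} w = {}" for \<delta>' :: "'s \<Rightarrow> bool \<Rightarrow> 's set" and w
    by (induction w) auto
  have runs: "nfa_steps (\<lambda>q a. set_option (\<delta> q a)) {q} w = set_option (dfa_run \<delta> q w)" for q w
    by (induction w arbitrary: q) (auto simp: no_run split: option.split)
  have "nfa_accepts {q0} (\<lambda>q a. set_option (\<delta> q a)) F w = dfa_accepts q0 \<delta> F w" for w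
    unfolding nfa_accepts_def dfa_accepts_def runs by (cases "dfa_run \<delta> q0 w") auto
  then show ?thesis using assms
    unfolding nfa_consistent_def dfa_consistent_def nfa_wf_def dfa_wf_def by auto
qed

lemma opt_NFA_le_opt_DFA:
  assumes "\<exists>(Q::nat set) q0 \<delta> F. dfa_consistent Q q0 \<delta> F P N"
  shows "opt_NFA P N \<le> opt_DFA P N"
proof -
  obtain Q :: "nat set" and q0 \<delta> F where "dfa_consistent Q q0 \<delta> F P N"
    and "card Q = opt_DFA P N"
    using LeastI_ex[of "\<lambda>n. \<exists>(Q::nat set) q0 \<delta> F. dfa_consistent Q q0 \<delta> F P N \<and> card Q = n"]
      assms unfolding opt_DFA_def by blast
  then show ?thesis
    unfolding opt_NFA_def by (metis (mono_tags) Least_le nfa_of_dfa_consistent)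
qed

lemma opt_NFA_lower_bound:
  assumes "\<exists>(Q::nat set) I \<delta> F. nfa_consistent Q I \<delta> F P N"
    and "\<And>(Q::nat set) I \<delta> F. nfa_consistent Q I \<delta> F P N \<Longrightarrow> b \<le> card Q"
  shows "b \<le> opt_NFA P N"
proof -
  obtain Q :: "nat set" and I \<delta> F where "nfa_consistent Q I \<delta> F P N"
    and "card Q = opt_NFA P N"
    using LeastI_ex[of "\<lambda>n. \<exists>(Q::nat set) I \<delta> F. nfa_consistent Q I \<delta> F P N \<and> card Q = n"]
      assms(1) unfolding opt_NFA_def by blast
  then show ?thesis using assms(2) by metis
qed

lemma enc_length:
  assumes "bij_betw enc V {w. length w = k}" and "u \<in> V"
  shows "length (enc u) = k"
  using bij_betwE[OF assms(1)] assms(2) by blast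

text \<open>P and N are disjoint because enc is injective of fixed length and G has no loops.\<close>
lemma red_P_red_N_disjoint:
  assumes "simple_graph V E" and "bij_betw enc V {w. length w = k}"
  shows "red_P V enc \<inter> red_N V E enc = {}"
proof (rule ccontr)
  assume "red_P V enc \<inter> red_N V E enc \<noteq> {}"
  then obtain u u' v where uv: "u \<in> V" "u' \<in> V" "v \<in> V" "E u' v"
    and eq: "enc u @ True # rev (enc u) = enc u' @ True # rev (enc v)"
    unfolding red_P_def red_N_def by auto
  have "length (enc u) = length (enc u')"
    using enc_length[OF assms(2)] uv by simp
  then have "enc u = enc u'" "enc u = enc v" using eq by auto
  then have "u' = v"
    using uv bij_betw_imp_inj_on[OF assms(2)] by (auto dest: inj_onD)
  then show False using uv assms(1) unfolding simple_graph_def by blast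
qed

lemma red_length_bound:
  assumes "bij_betw enc V {w. length w = k}"
  shows "\<forall>w \<in> red_P V enc \<union> red_N V E enc. length w \<le> 2 * k + 1"
  using enc_length[OF assms] unfolding red_P_def red_N_def by auto

lemma red_nfa_states_ge_chromatic:
  assumes "nfa_consistent Q I \<delta> F (red_P V enc) (red_N V E enc)"
  shows "chromatic_number V E \<le> card Q"
  by (rule nfa_states_colour_graph[OF assms, where x = enc and y = "\<lambda>u. True # rev (enc u)"])
     (auto simp: red_P_def red_N_def)

theorem mainTheorem7:
  fixes V :: "'a set" and E :: "'a \<Rightarrow> 'a \<Rightarrow> bool" and enc :: "'a \<Rightarrow> bool list" and k :: nat
    and Q :: "'s set" and I :: "'s set" and \<delta> :: "'s \<Rightarrow> bool \<Rightarrow> 's set" and F :: "'s set"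
  assumes "simple_graph V E"
    and "card V = 2 ^ k"
    and "bij_betw enc V {w. length w = k}"
  shows "(nfa_consistent Q I \<delta> F (red_P V enc) (red_N V E enc)
            \<longrightarrow> chromatic_number V E \<le> card Q)
         \<and> opt_DFA (red_P V enc) (red_N V E enc) \<ge> opt_NFA (red_P V enc) (red_N V E enc)
         \<and> opt_NFA (red_P V enc) (red_N V E enc) \<ge> chromatic_number V E"
proof -
  have dfa: "\<exists>(Q::nat set) q0 \<delta> F. dfa_consistent Q q0 \<delta> F (red_P V enc) (red_N V E enc)"
    using separating_dfa_exists[OF red_P_red_N_disjoint[OF assms(1,3)] red_length_bound[OF assms(3)]] .
  then have "\<exists>(Q::nat set) I \<delta> F. nfa_consistent Q I \<delta> F (red_P V enc) (red_N V E enc)"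
    by (blast dest: nfa_of_dfa_consistent)
  then have "chromatic_number V E \<le> opt_NFA (red_P V enc) (red_N V E enc)"
    by (rule opt_NFA_lower_bound) (rule red_nfa_states_ge_chromatic)
  then show ?thesis
    using opt_NFA_le_opt_DFA[OF dfa] red_nfa_states_ge_chromatic[of Q I \<delta> F V enc E] by simp
qed

end
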